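(* Let $\mathbf{X}\in\mathbb{R}^{n\times p}$ and for each $k\in\{1,\dots,p\}$ let $\mathcal{O}_k\subseteq\{1,\dots,n\}$ be a nonempty set of row indices, with $\mathbf{X}_{\mathcal{O}_k}$ the submatrix of $\mathbf{X}$ with rows in $\mathcal{O}_k$. Let $\pi$ be a permutation of $\{1,\dots,p\}$ with permutation matrix $P$ (whose $i$-th row is $e_{\pi(i)}^\top$), let $B=(\beta_1,\dots,\beta_p)\in\mathbb{R}^{p\times p}$ be strictly lower triangular with columns $\beta_j$, and let $\omega_1,\dots,\omega_p>0$. Define $$\ell_{\mathcal{O}}=\sum_{j=1}^p\left[\frac1{2\omega_j^2}\left\|\mathbf{X}_{\mathcal{O}_{\pi(j)},\pi(j)}-\mathbf{X}_{\mathcal{O}_{\pi(j)}}P^\top\beta_j\right\|^2+\frac12|\mathcal{O}_{\pi(j)}|\log\omega_j^2\right],$$ where $\mathbf{X}_{\mathcal{O}_{\pi(j)},\pi(j)}$ is column $\pi(j)$ of $\mathbf{X}_{\mathcal{O}_{\pi(j)}}$. Let $L_j=(e_j-\beta_j)/\omega_j$, $L=(L_1,\dots,L_p)$, and $\widehat\Sigma^{j}=\frac1{|\mathcal{O}_{\pi(j)}|}\mathbf{X}_{\mathcal{O}_{\pi(j)}}^\top\mathbf{X}_{\mathcal{O}_{\pi(j)}}$. Then $L\in\mathcal{L}_p$ and $$\ell_{\mathcal{O}}=\sum_{j=1}^p|\mathcal{O}_{\pi(j)}|\,\mathcal{L}_{\mathrm{chol}}\!\left(L_j;P\widehat\Sigma^jP^\top\right)=\sum_{j=1}^p|\mathcal{O}_{\pi(j)}|\left[\frac12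 L_j^\top P\widehat\Sigma^jP^\top L_j-\log L_{jj}\right].$$
   Context: $\{e_1,\dots,e_p\}$ is the canonical basis of $\mathbb{R}^p$; $\mathcal{L}_p$ is the set of $p\times p$ lower triangular matrices with positive diagonal. For a column vector $L_j$, $\mathcal{L}_{\mathrm{chol}}(L_j;A):=\frac12\operatorname{tr}(AL_jL_j^\top)-\log|L_j|$ with the convention $|L_j|:=L_{jj}$. Here $\mathcal{O}_k$ is the set of observations in which variable $k$ is not under experimental intervention, and $\ell_{\mathcal{O}}$ is the negative log-likelihood (up to parameter-free terms) of experimental data from a Gaussian linear structural equation model. *)

theory Defs
  imports "HOL-Analysis.Analysis"
begin

text \<open>Matrices are represented as functions nat \<Rightarrow> nat \<Rightarrow> real (row, column),
  vectors as nat \<Rightarrow> real, with explicit dimensions; indices are 0-based: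
  rows of X range over {..<n}, variables over {..<p}.\<close>

definition mmult :: "nat \<Rightarrow> (nat \<Rightarrow> nat \<Rightarrow> real) \<Rightarrow> (nat \<Rightarrow> nat \<Rightarrow> real) \<Rightarrow> (nat \<Rightarrow> nat \<Rightarrow> real)" where
  "mmult m A B = (\<lambda>i j. \<Sum>k<m. A i k * B k j)"

definition mtransp :: "(nat \<Rightarrow> nat \<Rightarrow> real) \<Rightarrow> (nat \<Rightarrow> nat \<Rightarrow> real)" where
  "mtransp A = (\<lambda>i j. A j i)"

definition mtrace :: "nat \<Rightarrow> (nat \<Rightarrow> nat \<Rightarrow> real) \<Rightarrow> real" where
  "mtrace p A = (\<Sum>i<p. A i i)"

definition outer :: "(nat \<Rightarrow> real) \<Rightarrow> (nat \<Rightarrow> real) \<Rightarrow> (nat \<Rightarrow> nat \<Rightarrow> real)" where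
  "outer v w = (\<lambda>i j. v i * w j)"

definition mvec :: "nat \<Rightarrow> (nat \<Rightarrow> nat \<Rightarrow> real) \<Rightarrow> (nat \<Rightarrow> real) \<Rightarrow> (nat \<Rightarrow> real)" where
  "mvec m A v = (\<lambda>i. \<Sum>k<m. A i k * v k)"

definition qform :: "nat \<Rightarrow> (nat \<Rightarrow> nat \<Rightarrow> real) \<Rightarrow> (nat \<Rightarrow> real) \<Rightarrow> real" where
  "qform p A v = (\<Sum>a<p. \<Sum>b<p. v a * A a b * v b)"

definition evec :: "nat \<Rightarrow> (nat \<Rightarrow> real)" where
  "evec j = (\<lambda>i. if i = j then 1 else 0)"

definition col :: "(nat \<Rightarrow> nat \<Rightarrow> real) \<Rightarrow> nat \<Rightarrow> (nat \<Rightarrow> real)" where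
  "col A j = (\<lambda>i. A i j)"

definition perm_mat :: "(nat \<Rightarrow> nat) \<Rightarrow> (nat \<Rightarrow> nat \<Rightarrow> real)" where
  "perm_mat \<pi> = (\<lambda>i k. if k = \<pi> i then 1 else 0)"

definition lower_pos :: "nat \<Rightarrow> (nat \<Rightarrow> nat \<Rightarrow> real) set" where
  "lower_pos p = {L. (\<forall>i<p. \<forall>j<p. i < j \<longrightarrow> L i j = 0) \<and> (\<forall>j<p. L j j > 0)}"

definition strictly_lower :: "nat \<Rightarrow> (nat \<Rightarrow> nat \<Rightarrow> real) \<Rightarrow> bool" where
  "strictly_lower p B \<longleftrightarrow> (\<forall>i<p. \<forall>j<p. i \<le> j \<longrightarrow> B i j = 0)"

text \<open>L_chol(L_j; A) = 1/2 tr(A L_j L_j^T) - log |L_j|, with |L_j| := L_jj.\<close>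
definition Lchol :: "nat \<Rightarrow> (nat \<Rightarrow> real) \<Rightarrow> nat \<Rightarrow> (nat \<Rightarrow> nat \<Rightarrow> real) \<Rightarrow> real" where
  "Lchol p v j A = 1/2 * mtrace p (mmult p A (outer v v)) - ln (v j)"

definition Sigma_hat :: "(nat \<Rightarrow> nat \<Rightarrow> real) \<Rightarrow> nat set \<Rightarrow> (nat \<Rightarrow> nat \<Rightarrow> real)" where
  "Sigma_hat X Obs = (\<lambda>k l. (1 / real (card Obs)) * (\<Sum>r\<in>Obs. X r k * X r l))"

definition ell_O :: "nat \<Rightarrow> (nat \<Rightarrow> nat \<Rightarrow> real) \<Rightarrow> (nat \<Rightarrow> nat set) \<Rightarrow> (nat \<Rightarrow> nat)
    \<Rightarrow> (nat \<Rightarrow> nat \<Rightarrow> real) \<Rightarrow> (nat \<Rightarrow> real) \<Rightarrow> real" where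
  "ell_O p X Obs \<pi> B \<omega> =
     (\<Sum>j<p. 1 / (2 * (\<omega> j)\<^sup>2) *
        (\<Sum>r\<in>Obs (\<pi> j). (X r (\<pi> j) - mvec p X (mvec p (mtransp (perm_mat \<pi>)) (col B j)) r)\<^sup>2)
      + 1/2 * real (card (Obs (\<pi> j))) * ln ((\<omega> j)\<^sup>2))"

end

theory Submission
  imports Defs
begin

text \<open>Since \<open>L\<^sub>j = (e\<^sub>j - \<beta>\<^sub>j) / \<omega>\<^sub>j\<close>, the regression residual of column \<open>\<pi>(j)\<close> on the
  rows \<open>\<O>\<^sub>\<pi>\<^sub>(\<^sub>j\<^sub>)\<close> is exactly \<open>\<omega>\<^sub>j X P\<^sup>T L\<^sub>j\<close>. Its squared norm divided by \<open>\<omega>\<^sub>j\<^sup>2\<close> is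
  therefore \<open>|\<O>| L\<^sub>j\<^sup>T P \<Sigma> P\<^sup>T L\<^sub>j\<close>, the trace term of the Cholesky loss, while
  \<open>log \<omega>\<^sub>j\<^sup>2 = -2 log L\<^sub>j\<^sub>j\<close> because \<open>\<beta>\<^sub>j\<close> vanishes on the diagonal.\<close>

lemma mtrace_mmult_outer: "mtrace p (mmult p A (outer v v)) = qform p A v"
  unfolding mtrace_def mmult_def outer_def qform_def
  by (intro sum.cong refl) (simp add: sum_distrib_left mult_ac)

lemma mvec_mvec_transp_perm_mat:
  assumes "\<pi> permutes {..<p}"
  shows "mvec p X (mvec p (mtransp (perm_mat \<pi>)) v) r = (\<Sum>m<p. X r (\<pi> m) * v m)"
proof -
  have "\<pi> m < p" if "m < p" for m
    using permutes_in_image[OF assms] that by auto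
  then have "mvec p X (mvec p (mtransp (perm_mat \<pi>)) v) r
      = (\<Sum>m<p. \<Sum>k<p. if k = \<pi> m then X r k * v m else 0)"
    unfolding mvec_def mtransp_def perm_mat_def
    by (subst sum.swap) (auto simp: sum_distrib_left mult_if_delta intro!: sum.cong)
  also have "\<dots> = (\<Sum>m<p. X r (\<pi> m) * v m)"
    using \<open>\<And>m. m < p \<Longrightarrow> \<pi> m < p\<close> by (intro sum.cong) auto
  finally show ?thesis .
qed

lemma perm_mat_conj_apply:
  assumes "\<pi> permutes {..<p}" "a < p" "b < p"
  shows "mmult p (mmult p (perm_mat \<pi>) S) (mtransp (perm_mat \<pi>)) a b = S (\<pi> a) (\<pi> b)"
proof -
  have \<pi>_ab: "\<pi> a < p" "\<pi> b < p"
    using permutes_in_image[OF assms(1)] assms(2,3) by auto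
  have row: "mmult p (perm_mat \<pi>) S a k = S (\<pi> a) k" for k
    unfolding mmult_def perm_mat_def using \<pi>_ab by (simp add: mult_if_delta)
  show ?thesis
    unfolding mmult_def[of p "mmult p (perm_mat \<pi>) S"] row
    using \<pi>_ab by (simp add: mtransp_def perm_mat_def mult.commute[of "S _ _"] mult_if_delta)
qed

lemma qform_perm_conj_Sigma_hat:
  assumes "\<pi> permutes {..<p}"
  shows "qform p (mmult p (mmult p (perm_mat \<pi>) (Sigma_hat X Obs)) (mtransp (perm_mat \<pi>))) v
       = (\<Sum>r\<in>Obs. (\<Sum>m<p. X r (\<pi> m) * v m)\<^sup>2) / real (card Obs)"
proof -
  have "qform p (mmult p (mmult p (perm_mat \<pi>) (Sigma_hat X Obs)) (mtransp (perm_mat \<pi>))) v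
      = (\<Sum>a<p. \<Sum>b<p. v a * Sigma_hat X Obs (\<pi> a) (\<pi> b) * v b)"
    unfolding qform_def by (intro sum.cong refl) (simp add: perm_mat_conj_apply[OF assms])
  also have "\<dots> = (\<Sum>r\<in>Obs. \<Sum>a<p. \<Sum>b<p. (X r (\<pi> a) * v a) * (X r (\<pi> b) * v b))
                  / real (card Obs)"
    unfolding Sigma_hat_def
    by (simp add: sum_divide_distrib sum_distrib_left sum_distrib_right mult_ac sum.swap[of _ Obs])
  also have "\<dots> = (\<Sum>r\<in>Obs. (\<Sum>m<p. X r (\<pi> m) * v m)\<^sup>2) / real (card Obs)"
    unfolding power2_eq_square sum_product ..
  finally show ?thesis .
qed

context
  fixes p :: nat and B :: "nat \<Rightarrow> nat \<Rightarrow> real" and \<omega> :: "nat \<Rightarrow> real"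
  assumes B_lower: "strictly_lower p B" and \<omega>_pos: "\<forall>j<p. \<omega> j > 0"
begin

lemma diag_scaled_unit_minus:
  "j < p \<Longrightarrow> (evec j j - B j j) / \<omega> j = 1 / \<omega> j"
  using B_lower unfolding strictly_lower_def evec_def by simp

lemma scaled_unit_minus_lower_pos:
  "(\<lambda>i j. (evec j i - B i j) / \<omega> j) \<in> lower_pos p"
  using B_lower \<omega>_pos diag_scaled_unit_minus
  unfolding lower_pos_def strictly_lower_def evec_def by auto

lemma residual_eq_scaled:
  assumes "\<pi> permutes {..<p}" "j < p"
  shows "X r (\<pi> j) - mvec p X (mvec p (mtransp (perm_mat \<pi>)) (col B j)) r
       = \<omega> j * (\<Sum>m<p. X r (\<pi> m) * ((evec j m - B m j) / \<omega> j))"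
proof -
  have "\<omega> j \<noteq> 0"
    using \<omega>_pos assms(2) by auto
  then have "\<omega> j * (\<Sum>m<p. X r (\<pi> m) * ((evec j m - B m j) / \<omega> j))
      = (\<Sum>m<p. X r (\<pi> m) * evec j m) - (\<Sum>m<p. X r (\<pi> m) * B m j)"
    by (simp add: sum_distrib_left sum_subtractf[symmetric] right_diff_distrib diff_divide_distrib)
  also have "(\<Sum>m<p. X r (\<pi> m) * evec j m) = X r (\<pi> j)"
    using assms(2) unfolding evec_def by (simp add: if_distrib cong: if_cong)
  finally show ?thesis
    by (simp add: mvec_mvec_transp_perm_mat[OF assms(1)] col_def)
qed

end

lemma gaussian_term_eq_chol:
  fixes w c :: real and S :: "nat \<Rightarrow> real"
  assumes "w > 0" "c > 0"
  shows "1 / (2 * w\<^sup>2) * (\<Sum>r\<in>R. (w * S r)\<^sup>2) + 1/2 * c * ln (w\<^sup>2)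
       = c * (1/2 * ((\<Sum>r\<in>R. (S r)\<^sup>2) / c) - ln (1 / w))"
proof -
  have "1 / (2 * w\<^sup>2) * (\<Sum>r\<in>R. (w * S r)\<^sup>2) = 1/2 * (\<Sum>r\<in>R. (S r)\<^sup>2)"
    using assms(1) by (simp add: power_mult_distrib sum_distrib_left[symmetric])
  moreover have "ln (w\<^sup>2) = - 2 * ln (1 / w)"
    using assms(1) by (simp add: ln_realpow ln_div)
  ultimately show ?thesis
    using assms(2) by (simp add: field_simps)
qed

theorem lemma2:
  fixes n p :: nat
    and X :: "nat \<Rightarrow> nat \<Rightarrow> real"
    and Obs :: "nat \<Rightarrow> nat set"
    and \<pi> :: "nat \<Rightarrow> nat"
    and B :: "nat \<Rightarrow> nat \<Rightarrow> real"
    and \<omega> :: "nat \<Rightarrow> real"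
  assumes Obs_sub: "\<forall>k<p. Obs k \<subseteq> {..<n}"
    and Obs_ne: "\<forall>k<p. Obs k \<noteq> {}"
    and perm: "\<pi> permutes {..<p}"
    and B_lower: "strictly_lower p B"
    and \<omega>_pos: "\<forall>j<p. \<omega> j > 0"
  defines "P \<equiv> perm_mat \<pi>"
    and "L \<equiv> (\<lambda>i j. (evec j i - B i j) / \<omega> j)"
  shows "L \<in> lower_pos p
    \<and> ell_O p X Obs \<pi> B \<omega>
        = (\<Sum>j<p. real (card (Obs (\<pi> j))) *
             Lchol p (col L j) j (mmult p (mmult p P (Sigma_hat X (Obs (\<pi> j)))) (mtransp P)))
    \<and> (\<Sum>j<p. real (card (Obs (\<pi> j))) *
             Lchol p (col L j) j (mmult p (mmult p P (Sigma_hat X (Obs (\<pi> j)))) (mtransp P)))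
        = (\<Sum>j<p. real (card (Obs (\<pi> j))) *
             (1/2 * qform p (mmult p (mmult p P (Sigma_hat X (Obs (\<pi> j)))) (mtransp P)) (col L j)
              - ln (L j j)))"
proof (intro conjI)
  show "L \<in> lower_pos p"
    unfolding L_def using scaled_unit_minus_lower_pos[OF B_lower \<omega>_pos] .
  show "ell_O p X Obs \<pi> B \<omega> = (\<Sum>j<p. real (card (Obs (\<pi> j))) *
      Lchol p (col L j) j (mmult p (mmult p P (Sigma_hat X (Obs (\<pi> j)))) (mtransp P)))"
    unfolding ell_O_def Lchol_def mtrace_mmult_outer
  proof (intro sum.cong refl)
    fix j assume "j \<in> {..<p}"
    then have j: "j < p" and "\<pi> j < p"
      using permutes_in_image[OF perm] by auto
    then have "card (Obs (\<pi> j)) > 0"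
      using Obs_sub Obs_ne by (meson card_gt_0_iff finite_lessThan finite_subset)
    with \<omega>_pos j show "1 / (2 * (\<omega> j)\<^sup>2) *
        (\<Sum>r\<in>Obs (\<pi> j). (X r (\<pi> j) - mvec p X (mvec p (mtransp (perm_mat \<pi>)) (col B j)) r)\<^sup>2)
      + 1/2 * real (card (Obs (\<pi> j))) * ln ((\<omega> j)\<^sup>2)
      = real (card (Obs (\<pi> j))) * (1/2 *
        qform p (mmult p (mmult p P (Sigma_hat X (Obs (\<pi> j)))) (mtransp P)) (col L j)
        - ln (col L j j))"
      unfolding residual_eq_scaled[OF B_lower \<omega>_pos perm j] P_def
        qform_perm_conj_Sigma_hat[OF perm]
      by (subst gaussian_term_eq_chol)
        (simp_all add: col_def L_def diag_scaled_unit_minus[OF B_lower \<omega>_pos j])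
  qed
  show "(\<Sum>j<p. real (card (Obs (\<pi> j))) *
      Lchol p (col L j) j (mmult p (mmult p P (Sigma_hat X (Obs (\<pi> j)))) (mtransp P)))
    = (\<Sum>j<p. real (card (Obs (\<pi> j))) *
      (1/2 * qform p (mmult p (mmult p P (Sigma_hat X (Obs (\<pi> j)))) (mtransp P)) (col L j)
       - ln (L j j)))"
    unfolding Lchol_def mtrace_mmult_outer col_def ..
qed

end
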